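(* Let $A$ be an absolute-valued algebra with left unit $e$, whose norm comes from the inner product $\langle\cdot|\cdot\rangle$, and assume $x^2e=x^2$ for all $x\in A$. Then (1) $(x^2)^2=-\|x\|^4e+2\langle e|x^2\rangle x^2$ for all $x\in A$; (2) $x^2(xe)=\|x\|^2x+2\langle e|x^2\rangle xe$ for all $x\in A$ orthogonal to $e$.
   Context: An absolute-valued algebra is a nonzero real algebra with a norm satisfying $\|xy\|=\|x\|\|y\|$; when it has a left unit $e$ ($ex=x$ for all $x$), its norm is induced by an inner product $\langle\cdot|\cdot\rangle$ with $\|x\|^2=\langle x|x\rangle$. *)

theory Defs
  imports "HOL-Analysis.Analysis"
begin

text \<open>Since the norm of a real_inner space is the one induced by the
inner product, the standing assumption that the norm comes from an inner product is built in.\<close>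

definition absolute_valued_algebra :: "('a::real_inner \<Rightarrow> 'a \<Rightarrow> 'a) \<Rightarrow> bool" where
  "absolute_valued_algebra mul \<longleftrightarrow>
     bilinear mul \<and> (\<exists>x::'a. x \<noteq> 0) \<and> (\<forall>x y. norm (mul x y) = norm x * norm y)"

definition is_left_unit :: "('a \<Rightarrow> 'a \<Rightarrow> 'a) \<Rightarrow> 'a \<Rightarrow> bool" where
  "is_left_unit mul e \<longleftrightarrow> (\<forall>x. mul e x = x)"

end

theory Submission
  imports Defs
begin

text \<open>Polarizing the multiplicativity of the norm gives the identities
  \<open>\<langle>pq|ps\<rangle> = \<parallel>p\<parallel>\<^sup>2\<langle>q|s\<rangle>\<close> and \<open>\<langle>pq|rs\<rangle> + \<langle>rq|ps\<rangle> = 2\<langle>p|r\<rangle>\<langle>q|s\<rangle>\<close>.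
  With them every inner product among \<open>(x\<^sup>2)\<^sup>2\<close> (resp. \<open>x\<^sup>2(xe)\<close>) and the claimed right-hand
  side \<open>c\<close> can be computed; they turn out to satisfy \<open>\<langle>u|u\<rangle> = \<langle>u|c\<rangle> = \<langle>c|c\<rangle>\<close>, which
  forces \<open>u = c\<close>.\<close>

lemma eq_if_inner_eq:
  fixes u c :: "'a::real_inner"
  assumes "inner u u = r" and "inner u c = r" and "inner c c = r"
  shows "u = c"
  using assms vector_eq[of u c] by simp

locale norm_multiplicative_product =
  fixes mul :: "'a::real_inner \<Rightarrow> 'a \<Rightarrow> 'a"
  assumes bilinear: "bilinear mul"
    and norm_mul: "norm (mul x y) = norm x * norm y"
begin

lemma inner_mul_self: "inner (mul p q) (mul p q) = inner p p * inner q q"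
  by (simp flip: power2_norm_eq_inner add: norm_mul power_mult_distrib)

lemma inner_mul_same_left: "inner (mul p q) (mul p s) = inner p p * inner q s"
proof -
  have "inner (mul p q + mul p s) (mul p q + mul p s) = inner p p * inner (q + s) (q + s)"
    using inner_mul_self[of p "q + s"] by (simp add: bilinear_radd[OF bilinear])
  then show ?thesis
    using inner_mul_self[of p q] inner_mul_self[of p s]
    by (simp add: inner_add_left inner_add_right inner_commute algebra_simps)
qed

lemma inner_mul_polarized:
  "inner (mul p q) (mul r s) + inner (mul r q) (mul p s) = 2 * inner p r * inner q s"
proof -
  have "inner (mul p q + mul r q) (mul p s + mul r s) = inner (p + r) (p + r) * inner q s"
    using inner_mul_same_left[of "p + r" q s] by (simp add: bilinear_ladd[OF bilinear])
  then show ?thesis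
    using inner_mul_same_left[of p q s] inner_mul_same_left[of r q s]
    by (simp add: inner_add_left inner_add_right inner_commute algebra_simps)
qed

lemma inner_self_left_unit_eq_1:
  fixes z :: 'a
  assumes "is_left_unit mul e" and "z \<noteq> 0"
  shows "inner e e = 1"
  using inner_mul_self[of e z] assms by (simp add: is_left_unit_def)

end

lemma absolute_valued_algebra_norm_multiplicative_product:
  assumes "absolute_valued_algebra mul"
  shows "norm_multiplicative_product mul"
  using assms by (simp add: absolute_valued_algebra_def norm_multiplicative_product_def)

locale left_unital_norm_multiplicative_product = norm_multiplicative_product +
  fixes e :: "'a::real_inner"
  assumes left_unit: "mul e x = x"
    and unit_norm: "inner e e = 1"
    and square_mul_unit: "mul (mul x x) e = mul x x"
begin

lemma square_square:
  "mul (mul x x) (mul x x) = (- inner (mul x x) (mul x x)) *\<^sub>R e + (2 * inner e (mul x x)) *\<^sub>R mul x x"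
proof -
  define a u where "a = mul x x" and "u = mul a a"
  define n t where "n = inner a a" and "t = inner e a"
  have uu: "inner u u = n * n"
    unfolding u_def n_def by (rule inner_mul_self)
  have ua: "inner u a = n * t"
    using inner_mul_same_left[of a a e] square_mul_unit[of x]
    unfolding u_def a_def n_def t_def by (simp add: inner_commute)
  have ue: "inner u e = 2 * t * t - n"
    using inner_mul_polarized[of a a e e] left_unit[of e] left_unit[of a] square_mul_unit[of x]
    unfolding u_def a_def n_def t_def by (simp add: inner_commute algebra_simps)
  define c where "c = (- n) *\<^sub>R e + (2 * t) *\<^sub>R a"
  have "inner u c = - n * inner u e + 2 * t * inner u a"
    unfolding c_def by (simp add: inner_add_right inner_diff_right)
  also have "\<dots> = n * n"
    unfolding ue ua by (simp add: algebra_simps)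
  finally have uc: "inner u c = n * n" .
  have "inner c c = n * n * inner e e - 4 * n * t * inner e a + 4 * t * t * inner a a"
    unfolding c_def by (simp add: inner_add_left inner_add_right inner_commute algebra_simps)
  also have "\<dots> = n * n"
    unfolding unit_norm t_def[symmetric] n_def[symmetric] by (simp add: algebra_simps)
  finally have cc: "inner c c = n * n" .
  have "u = c"
    using uu uc cc by (rule eq_if_inner_eq)
  then show ?thesis
    unfolding u_def c_def a_def n_def t_def .
qed

lemma square_mul_mul_unit:
  assumes "inner e x = 0"
  shows "mul (mul x x) (mul x e) = (inner x x) *\<^sub>R x + (2 * inner e (mul x x)) *\<^sub>R mul x e"
proof -
  define a v u where "a = mul x x" and "v = mul x e" and "u = mul a v"
  define n t where "n = inner x x" and "t = inner e a"
  have uu: "inner u u = n * n * n"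
    using inner_mul_self[of a v] inner_mul_self[of x x] inner_mul_self[of x e] unit_norm
    unfolding u_def a_def v_def n_def by simp
  have vv: "inner v v = n"
    using inner_mul_self[of x e] unit_norm unfolding v_def n_def by simp
  have uv: "inner u v = n * t"
    using inner_mul_polarized[of a v e v] left_unit[of v] vv
    unfolding u_def t_def by (simp add: inner_commute algebra_simps)
  have xv: "inner x v = - t"
    using inner_mul_polarized[of e x x e] left_unit[of x] left_unit[of e] assms
    unfolding v_def t_def a_def by (simp add: inner_commute algebra_simps)
  have "inner (mul a x) v = - (n * n)"
    using inner_mul_polarized[of a x x e] square_mul_unit[of x] assms inner_mul_self[of x x]
    unfolding v_def a_def n_def by (simp add: inner_commute algebra_simps)
  then have ux: "inner u x = n * n - 2 * t * t"
    using inner_mul_polarized[of a v e x] left_unit[of x] left_unit[of v] xv unit_norm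
    unfolding u_def t_def by (simp add: inner_commute algebra_simps)
  define c where "c = n *\<^sub>R x + (2 * t) *\<^sub>R v"
  have "inner u c = n * inner u x + 2 * t * inner u v"
    unfolding c_def by (simp add: inner_add_right)
  also have "\<dots> = n * n * n"
    unfolding ux uv by (simp add: algebra_simps)
  finally have uc: "inner u c = n * n * n" .
  have "inner c c = n * n * inner x x + 4 * n * t * inner x v + 4 * t * t * inner v v"
    unfolding c_def by (simp add: inner_add_left inner_add_right inner_commute algebra_simps)
  also have "\<dots> = n * n * n"
    unfolding xv vv n_def[symmetric] by (simp add: algebra_simps)
  finally have cc: "inner c c = n * n * n" .
  have "u = c"
    using uu uc cc by (rule eq_if_inner_eq)
  then show ?thesis
    unfolding u_def c_def a_def v_def n_def t_def .
qed

end

theorem lemma5: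
  fixes mul :: "'a::real_inner \<Rightarrow> 'a \<Rightarrow> 'a" and e :: 'a
  assumes "absolute_valued_algebra mul"
    and "is_left_unit mul e"
    and "\<forall>x. mul (mul x x) e = mul x x"
  shows "(\<forall>x. mul (mul x x) (mul x x)
              = (- (norm x ^ 4)) *\<^sub>R e + (2 * (e \<bullet> mul x x)) *\<^sub>R mul x x)
       \<and> (\<forall>x. e \<bullet> x = 0 \<longrightarrow>
              mul (mul x x) (mul x e)
              = (norm x ^ 2) *\<^sub>R x + (2 * (e \<bullet> mul x x)) *\<^sub>R mul x e)"
proof -
  interpret norm_multiplicative_product mul
    using assms(1) by (rule absolute_valued_algebra_norm_multiplicative_product)
  obtain z :: 'a where "z \<noteq> 0"
    using assms(1) by (auto simp: absolute_valued_algebra_def)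
  interpret left_unital_norm_multiplicative_product mul e
    using assms(2,3) inner_self_left_unit_eq_1[OF assms(2) \<open>z \<noteq> 0\<close>]
    by unfold_locales (auto simp: is_left_unit_def)
  have "inner (mul x x) (mul x x) = norm x ^ 4" for x
    by (simp add: norm_mul power4_eq_xxxx power2_eq_square flip: power2_norm_eq_inner)
  then show ?thesis
    using square_square square_mul_mul_unit by (simp add: power2_norm_eq_inner)
qed

end
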